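(* In the isotropic setting below, let $F\in\mathrm{GL}^+(3)$ be fixed and $t\mapsto C_p(t)\in\mathrm{PSym}(3)$ be differentiable with $$\frac{d}{dt}[C_p]=\lambda(t)\,\frac{\mathrm{dev}_3\widetilde\Sigma}{\varphi}\,C_p,\qquad \lambda(t)\ge0,\quad \varphi:=\sqrt{\mathrm{tr}[(\mathrm{dev}_3\widetilde\Sigma)^2]}>0,$$ where $\widetilde\Sigma$ and $\varphi$ are evaluated at $(C,C_p(t))$. Then $\frac{d}{dt}[C_p]$ is symmetric, $\det C_p(t)$ is constant in $t$, and $$\frac{d}{dt}\widetilde W\big(CC_p^{-1}(t)\big)=-\frac{\lambda(t)}{2}\,\varphi=-\frac{\lambda(t)}{2}\,\big\|\mathrm{dev}_3\big(U_p^{-1}\widetilde\Sigma\,U_p\big)\big\|\le0,\qquad U_p=\sqrt{C_p(t)}.$$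
   Context: $W$ objective and isotropic, written $W(F_e)=\Psi(I_1(C_e),I_2(C_e),I_3(C_e))$ with $\Psi\in C^1$; $\widetilde W(X)=\Psi(\mathrm{tr}X,\mathrm{tr}(\mathrm{Cof}X),\det X)$. $C=F^TF$. $\langle X,Y\rangle=\mathrm{tr}(XY^T)$, $\|\cdot\|$ Frobenius norm, $D$ gradient, $\mathrm{dev}_3X=X-\frac13\mathrm{tr}(X)\mathbb{1}$. $\widetilde\Sigma:=2\,C\,D\widetilde W(CC_p^{-1})\,C_p^{-1}$. *)

theory Defs
  imports "HOL-Analysis.Analysis"
begin

type_synonym mat3 = "real^3^3"

text \<open>Cofactor matrix: entry (i,j) is the determinant of X with row i replaced by
  the j-th unit row, i.e. (-1)^(i+j) times the (i,j) minor.\<close>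
definition Cof :: "mat3 \<Rightarrow> mat3" where
  "Cof X = (\<chi> i j. det (\<chi> k l. if k = i then (if l = j then 1 else 0) else X $ k $ l))"

definition PSym :: "mat3 set" where
  "PSym = {P. transpose P = P \<and> (\<forall>x::real^3. x \<noteq> 0 \<longrightarrow> x \<bullet> (P *v x) > 0)}"

definition msqrt :: "mat3 \<Rightarrow> mat3" where
  "msqrt P = (THE U. U \<in> PSym \<and> U ** U = P)"

definition dev3 :: "mat3 \<Rightarrow> mat3" where
  "dev3 X = X - ((1/3) * trace X) *\<^sub>R mat 1"

definition Wt :: "(real^3 \<Rightarrow> real) \<Rightarrow> mat3 \<Rightarrow> real" where
  "Wt \<Psi> X = \<Psi> (vector [trace X, trace (Cof X), det X])"

text \<open>Gradient D f(X) w.r.t. the Frobenius inner product <X,Y> = tr(X Y^T)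
  (which is the inner product of type real^3^3).\<close>
definition Dgrad :: "(mat3 \<Rightarrow> real) \<Rightarrow> mat3 \<Rightarrow> mat3" where
  "Dgrad f X = (THE G. (f has_derivative (\<lambda>H. G \<bullet> H)) (at X))"

definition Sigt :: "(real^3 \<Rightarrow> real) \<Rightarrow> mat3 \<Rightarrow> mat3 \<Rightarrow> mat3" where
  "Sigt \<Psi> C Cp = 2 *\<^sub>R (C ** Dgrad (Wt \<Psi>) (C ** matrix_inv Cp) ** matrix_inv Cp)"

definition phi :: "(real^3 \<Rightarrow> real) \<Rightarrow> mat3 \<Rightarrow> mat3 \<Rightarrow> real" where
  "phi \<Psi> C Cp = sqrt (trace (dev3 (Sigt \<Psi> C Cp) ** dev3 (Sigt \<Psi> C Cp)))"

end

theory Submission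
  imports Defs
begin

(* Write C = F^T F, X = C Cp^-1, G = D Wt(X) and Sigma = 2 C G Cp^-1. The flow rule is
   Cp' = (lam/phi) dev(Sigma) Cp. Isotropy makes K = C G symmetric (G is a combination of
   1, tr(X) 1 - X^T and Cof X), and then:
   - dev(Sigma) Cp = 2 K - (tr Sigma / 3) Cp is symmetric, so Cp' is symmetric;
   - Cof Cp : Cp' = det Cp tr(dev Sigma) (lam/phi) = 0 (Jacobi), so det Cp is constant;
   - d/dt Wt(C Cp^-1) = G : (- C Cp^-1 Cp' Cp^-1) = -(lam/phi) tr(dev(Sigma)^2) / 2
     = -lam phi / 2, and phi = |dev(U^-1 Sigma U)| with U = sqrt Cp because U^-1 Sigma U is a
     symmetric tensor similar to Sigma. *)

lemma matrix_mult_diff_left: "(A::real^'n^'n) ** (B - C) = A ** B - A ** C"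
  by (simp add: matrix_matrix_mult_def vec_eq_iff sum_subtractf right_diff_distrib)

lemma matrix_mult_diff_right: "((A::real^'n^'n) - B) ** C = A ** C - B ** C"
  by (simp add: matrix_matrix_mult_def vec_eq_iff sum_subtractf left_diff_distrib)

lemma matrix_mult_add_right: "((A::real^'n^'n) + B) ** C = A ** C + B ** C"
  by (simp add: matrix_matrix_mult_def vec_eq_iff sum.distrib distrib_right)

lemma matrix_mult_scaleR_left: "(c *\<^sub>R (A::real^'n^'n)) ** B = c *\<^sub>R (A ** B)"
  by (simp add: matrix_matrix_mult_def vec_eq_iff sum_distrib_left mult.assoc)

lemma matrix_mult_scaleR_right: "(A::real^'n^'n) ** (c *\<^sub>R B) = c *\<^sub>R (A ** B)"
  by (simp add: matrix_matrix_mult_def vec_eq_iff sum_distrib_left mult.left_commute)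

lemma matrix_mult_minus_right: "(A::real^'n^'n) ** (- B) = - (A ** B)"
  by (simp add: matrix_matrix_mult_def vec_eq_iff sum_negf)

lemma transpose_add: "transpose ((A::real^'n^'n) + B) = transpose A + transpose B"
  by (simp add: vec_eq_iff transpose_def)

lemma transpose_diff: "transpose ((A::real^'n^'n) - B) = transpose A - transpose B"
  by (simp add: vec_eq_iff transpose_def)

lemma trace_scaleR: "trace (c *\<^sub>R (A::real^'n^'n)) = c * trace A"
  by (simp add: trace_def sum_distrib_left)

lemma trace_transpose: "trace (transpose (A::real^'n^'n)) = trace A"
  by (simp add: trace_def transpose_def)

lemma inner_matrix_trace: "(A::real^'n^'n) \<bullet> B = trace (A ** transpose B)"
  by (simp add: inner_vec_def trace_def matrix_matrix_mult_def transpose_def)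

lemma bounded_bilinear_matrix_mult: "bounded_bilinear (\<lambda>(A::real^'n^'n) B. A ** B)"
proof -
  have "bilinear (\<lambda>(A::real^'n^'n) B. A ** B)"
    unfolding bilinear_def linear_iff
    by (simp add: matrix_add_ldistrib matrix_mult_add_right matrix_mult_scaleR_left
        matrix_mult_scaleR_right)
  thus ?thesis using bilinear_conv_bounded_bilinear by blast
qed

lemma matrix_inv_right: "invertible (A::real^'n^'n) \<Longrightarrow> A ** matrix_inv A = mat 1"
  unfolding invertible_def matrix_inv_def by (rule someI2_ex) auto

lemma matrix_inv_left: "invertible (A::real^'n^'n) \<Longrightarrow> matrix_inv A ** A = mat 1"
  unfolding invertible_def matrix_inv_def by (rule someI2_ex) auto

lemma matrix_inv_unique:
  assumes "(A::real^'n^'n) ** B = mat 1" shows "matrix_inv A = B"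
proof -
  have inv: "invertible A" using assms invertible_right_inverse by blast
  have "matrix_inv A = matrix_inv A ** (A ** B)" using assms by simp
  also have "\<dots> = B" using matrix_inv_left[OF inv] by (simp add: matrix_mul_assoc)
  finally show ?thesis .
qed

lemma invertible_matrix_inv: "invertible (A::real^'n^'n) \<Longrightarrow> invertible (matrix_inv A)"
  using matrix_inv_left invertible_right_inverse by blast

lemma matrix_inv_inv: "invertible (A::real^'n^'n) \<Longrightarrow> matrix_inv (matrix_inv A) = A"
  by (rule matrix_inv_unique[OF matrix_inv_left])

lemma matrix_inv_transpose:
  "invertible (A::real^'n^'n) \<Longrightarrow> matrix_inv (transpose A) = transpose (matrix_inv A)"
  by (rule matrix_inv_unique) (metis matrix_inv_left matrix_transpose_mul transpose_mat)

lemma matrix_inv_mult: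
  assumes "invertible (A::real^'n^'n)" and "invertible (B::real^'n^'n)"
  shows "matrix_inv (A ** B) = matrix_inv B ** matrix_inv A"
proof (rule matrix_inv_unique)
  have "A ** B ** (matrix_inv B ** matrix_inv A) = A ** (B ** matrix_inv B) ** matrix_inv A"
    by (simp add: matrix_mul_assoc)
  thus "A ** B ** (matrix_inv B ** matrix_inv A) = mat 1"
    using matrix_inv_right[OF assms(1)] matrix_inv_right[OF assms(2)] by simp
qed

lemma det_matrix_inv: "invertible (A::real^'n^'n) \<Longrightarrow> det (matrix_inv A) = 1 / det A"
  by (metis det_I det_mul invertible_det_nz matrix_inv_right nonzero_eq_divide_eq mult.commute)

lemma mult_inverse_cancel: "(A::real^'n^'n) ** B = mat 1 \<Longrightarrow> X ** A ** B = X"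
  by (metis matrix_mul_assoc matrix_mul_rid)

lemma symmetric_inner_commute:
  "transpose (S::real^'n^'n) = S \<Longrightarrow> x \<bullet> (S *v y) = (S *v x) \<bullet> y"
  by (metis dot_lmul_matrix transpose_matrix_vector)

lemma trace_congruence_columns:
  "trace (transpose B ** A ** (B::real^'n^'n)) = (\<Sum>j\<in>UNIV. column j B \<bullet> (A *v column j B))"
  unfolding trace_def matrix_matrix_mult_def transpose_def column_def inner_vec_def
    matrix_vector_mult_def
  apply (simp add: sum_distrib_left sum_distrib_right mult.assoc mult.left_commute)
  apply (rule sum.cong[OF refl])
  apply (subst sum.swap)
  apply (simp add: mult_ac)
  done

lemma PSym_symmetric: "P \<in> PSym \<Longrightarrow> transpose P = P"
  by (simp add: PSym_def)

lemma PSym_positive: "P \<in> PSym \<Longrightarrow> x \<noteq> 0 \<Longrightarrow> x \<bullet> (P *v x) > 0"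
  by (simp add: PSym_def)

lemma PSym_invertible: "P \<in> PSym \<Longrightarrow> invertible P"
proof -
  assume P: "P \<in> PSym"
  have "P *v x = 0 \<Longrightarrow> x = 0" for x using PSym_positive[OF P, of x] by auto
  hence "inj ((*v) P)"
    by (metis (no_types, lifting) injI matrix_vector_mult_diff_distrib right_minus_eq)
  thus ?thesis by (metis invertible_left_inverse matrix_left_invertible_injective)
qed

lemma PSym_matrix_inv: "P \<in> PSym \<Longrightarrow> matrix_inv P \<in> PSym"
proof -
  assume P: "P \<in> PSym"
  have inv: "invertible P" using PSym_invertible[OF P] .
  have "x \<bullet> (matrix_inv P *v x) > 0" if "x \<noteq> 0" for x
  proof -
    let ?y = "matrix_inv P *v x"
    have Py: "P *v ?y = x" using matrix_inv_right[OF inv] by (simp add: matrix_vector_mul_assoc)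
    hence "?y \<noteq> 0" using that by auto
    hence "?y \<bullet> (P *v ?y) > 0" using PSym_positive[OF P] by blast
    thus ?thesis using Py by (simp add: inner_commute)
  qed
  moreover have "transpose (matrix_inv P) = matrix_inv P"
    using matrix_inv_transpose[OF inv] PSym_symmetric[OF P] by simp
  ultimately show ?thesis by (simp add: PSym_def)
qed

lemma PSym_trace_congruence_pos:
  assumes P: "P \<in> PSym" and B: "invertible (B::mat3)"
  shows "trace (transpose B ** P ** B) > 0"
proof -
  have "column j B \<noteq> 0" for j
  proof
    assume "column j B = 0"
    hence "B *v axis j 1 = 0" by (simp add: matrix_vector_mult_basis)
    thus False using inj_matrix_vector_mult[OF B]
      by (metis axis_eq_0_iff injD matrix_vector_mult_0_right zero_neq_one)
  qed
  thus ?thesis unfolding trace_congruence_columns by (simp add: sum_pos PSym_positive[OF P])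
qed

lemma PSym_trace_congruence_nonneg:
  assumes P: "P \<in> PSym"
  shows "trace (transpose B ** P ** (B::mat3)) \<ge> 0"
    and "trace (transpose B ** P ** B) = 0 \<Longrightarrow> B = 0"
proof -
  have nonneg: "column j B \<bullet> (P *v column j B) \<ge> 0" for j
    using PSym_positive[OF P, of "column j B"] by (cases "column j B = 0") auto
  thus "trace (transpose B ** P ** B) \<ge> 0"
    unfolding trace_congruence_columns by (simp add: sum_nonneg)
  assume "trace (transpose B ** P ** B) = 0"
  hence "\<forall>j\<in>UNIV. column j B \<bullet> (P *v column j B) = 0"
    unfolding trace_congruence_columns by (subst (asm) sum_nonneg_eq_0_iff) (auto simp: nonneg)
  hence "column j B = 0" for j using PSym_positive[OF P, of "column j B"] by force
  thus "B = 0" by (simp add: vec_eq_iff column_def)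
qed

lemma quadratic_nonpos_linear_coeff_zero:
  fixes a b :: real
  assumes nonpos: "\<forall>t. a * t + b * t\<^sup>2 \<le> 0"
  shows "a = 0"
proof -
  define e where "e = 1 / (2 * (\<bar>b\<bar> + 1))"
  have e: "e > 0" and be: "\<bar>b * e\<bar> < 1" unfolding e_def by (simp_all add: abs_mult field_simps)
  have "a * (a * e) + b * (a * e)\<^sup>2 \<le> 0" using nonpos by blast
  hence "a\<^sup>2 * (e * (1 + b * e)) \<le> 0" by (simp add: power2_eq_square algebra_simps)
  moreover have "e * (1 + b * e) > 0" using e be by simp
  ultimately show ?thesis by (metis mult_pos_pos not_le zero_less_power2)
qed

text \<open>Rayleigh quotient: a maximiser of the quadratic form of a symmetric matrix on the
  unit sphere of an invariant subspace is an eigenvector.\<close>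
lemma symmetric_eigenvector_in_invariant_subspace:
  fixes S :: "real^'n^'n"
  assumes sym: "transpose S = S" and sub: "subspace V" and inv: "\<forall>v\<in>V. S *v v \<in> V"
    and vV: "v \<in> V" and v0: "v \<noteq> 0"
  shows "\<exists>x\<in>V. norm x = 1 \<and> S *v x = (x \<bullet> (S *v x)) *\<^sub>R x"
proof -
  let ?K = "sphere 0 1 \<inter> V"
  let ?q = "\<lambda>x. x \<bullet> (S *v x)"
  have "v /\<^sub>R norm v \<in> ?K" using vV v0 sub by (simp add: subspace_scale)
  moreover have "compact ?K" by (simp add: closed_subspace compact_Int_closed sub)
  moreover have "continuous_on ?K ?q"
    by (intro continuous_intros linear_continuous_on matrix_vector_mul_bounded_linear)
  ultimately obtain x0 where x0K: "x0 \<in> ?K" and x0max: "\<forall>y\<in>?K. ?q y \<le> ?q x0"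
    using continuous_attains_sup[of ?K ?q] by blast
  define \<mu> where "\<mu> = ?q x0"
  have x0V: "x0 \<in> V" and x0x0: "x0 \<bullet> x0 = 1" using x0K by (auto simp: dot_square_norm)
  have bound: "?q z \<le> \<mu> * (z \<bullet> z)" if zV: "z \<in> V" for z
  proof (cases "z = 0")
    case False
    have "z /\<^sub>R norm z \<in> ?K" using zV False sub by (simp add: subspace_scale)
    hence "?q (z /\<^sub>R norm z) \<le> \<mu>" using x0max \<mu>_def by blast
    hence "?q z / (norm z)\<^sup>2 \<le> \<mu>"
      by (simp add: matrix_vector_mult_scaleR power2_eq_square field_simps)
    thus ?thesis using False by (simp add: power2_norm_eq_inner field_simps)
  qed simp
  have orth: "y \<bullet> (S *v x0 - \<mu> *\<^sub>R x0) = 0" if yV: "y \<in> V" for y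
  proof -
    have sym_xy: "x0 \<bullet> (S *v y) = y \<bullet> (S *v x0)"
      using symmetric_inner_commute[OF sym, of x0 y] by (simp add: inner_commute)
    have "(2 * (y \<bullet> (S *v x0) - \<mu> * (y \<bullet> x0))) * t + (?q y - \<mu> * (y \<bullet> y)) * t\<^sup>2 \<le> 0" for t
    proof -
      have "x0 + t *\<^sub>R y \<in> V" using sub x0V yV by (simp add: subspace_add subspace_scale)
      from bound[OF this] show ?thesis using x0x0
        by (simp add: \<mu>_def matrix_vector_right_distrib matrix_vector_mult_scaleR inner_add_left
            inner_add_right inner_commute sym_xy power2_eq_square algebra_simps)
    qed
    hence "2 * (y \<bullet> (S *v x0) - \<mu> * (y \<bullet> x0)) = 0"
      by (intro quadratic_nonpos_linear_coeff_zero) blast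
    thus ?thesis by (simp add: inner_diff_right)
  qed
  have "S *v x0 - \<mu> *\<^sub>R x0 \<in> V" using sub inv x0V by (simp add: subspace_diff subspace_scale)
  hence "S *v x0 = \<mu> *\<^sub>R x0" using orth by (metis inner_eq_zero_iff right_minus_eq)
  thus ?thesis using x0V x0x0 \<mu>_def by (auto simp: norm_eq_sqrt_inner)
qed

lemma symmetric_orthocomplement_invariant:
  fixes S :: "real^'n^'n"
  assumes sym: "transpose S = S" and inv: "\<forall>v\<in>V. S *v v \<in> V" and eig: "S *v e = \<mu> *\<^sub>R e"
  shows "\<forall>v\<in>V \<inter> {y. orthogonal e y}. S *v v \<in> V \<inter> {y. orthogonal e y}"
proof
  fix v assume "v \<in> V \<inter> {y. orthogonal e y}"
  hence "v \<in> V" "e \<bullet> v = 0" by (auto simp: orthogonal_def)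
  moreover have "e \<bullet> (S *v v) = \<mu> * (e \<bullet> v)"
    using symmetric_inner_commute[OF sym, of e v] eig by simp
  ultimately show "S *v v \<in> V \<inter> {y. orthogonal e y}" using inv by (simp add: orthogonal_def)
qed

lemma symmetric_orthonormal_eigenbasis:
  fixes S :: "real^'n^'n"
  assumes sym: "transpose S = S"
  shows "subspace V \<Longrightarrow> \<forall>v\<in>V. S *v v \<in> V \<Longrightarrow> \<exists>B. B \<subseteq> V \<and> span B = V
           \<and> pairwise orthogonal B \<and> (\<forall>e\<in>B. norm e = 1 \<and> S *v e = (e \<bullet> (S *v e)) *\<^sub>R e)"
proof (induction "dim V" arbitrary: V rule: less_induct)
  case less
  show ?case
  proof (cases "V \<subseteq> {0}")
    case True
    hence "V = {0}" using subspace_0[OF less.prems(1)] by blast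
    thus ?thesis by (intro exI[of _ "{}"]) auto
  next
    case False
    then obtain v where "v \<in> V" "v \<noteq> 0" by blast
    then obtain e where eV: "e \<in> V" and e1: "norm e = 1"
      and eig: "S *v e = (e \<bullet> (S *v e)) *\<^sub>R e"
      using symmetric_eigenvector_in_invariant_subspace[OF sym less.prems] by blast
    have ee: "e \<bullet> e = 1" using e1 by (simp add: dot_square_norm)
    define V' where "V' = V \<inter> {y. orthogonal e y}"
    have subV': "subspace V'"
      unfolding V'_def by (intro subspace_inter less.prems(1) subspace_orthogonal_to_vector)
    have invV': "\<forall>v\<in>V'. S *v v \<in> V'"
      unfolding V'_def by (rule symmetric_orthocomplement_invariant[OF sym less.prems(2) eig])
    have "e \<notin> V'" using ee by (simp add: V'_def orthogonal_def)
    hence "V' \<subset> V" using eV by (auto simp: V'_def)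
    hence "span V' \<subset> span V" using less.prems(1) subV' by (metis span_eq_iff)
    hence "dim V' < dim V" by (rule dim_psubset)
    then obtain B' where B': "B' \<subseteq> V'" "span B' = V'" "pairwise orthogonal B'"
        "\<forall>e\<in>B'. norm e = 1 \<and> S *v e = (e \<bullet> (S *v e)) *\<^sub>R e"
      using less.hyps subV' invV' by blast
    have "V \<subseteq> span (insert e B')"
    proof
      fix v assume vV: "v \<in> V"
      have "v - (e \<bullet> v) *\<^sub>R e \<in> V'"
        using vV eV ee less.prems(1)
        by (simp add: V'_def orthogonal_def subspace_diff subspace_scale inner_diff_right)
      hence "v - (e \<bullet> v) *\<^sub>R e \<in> span (insert e B')" using B'(2) span_mono[of B'] by blast
      moreover have "(e \<bullet> v) *\<^sub>R e \<in> span (insert e B')" by (simp add: span_base span_mul)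
      ultimately show "v \<in> span (insert e B')" using span_add by fastforce
    qed
    moreover have "span (insert e B') \<subseteq> V"
      using B'(1) eV less.prems(1) by (intro span_minimal) (auto simp: V'_def)
    moreover have "pairwise orthogonal (insert e B')"
      using B'(1,3) by (auto simp: pairwise_insert V'_def orthogonal_commute)
    ultimately show ?thesis using B'(1,4) eV e1 eig
      by (intro exI[of _ "insert e B'"]) (auto simp: V'_def)
  qed
qed

lemma PSym_eigenbasis:
  assumes P: "P \<in> PSym"
  shows "\<exists>B m. finite B \<and> span B = UNIV \<and> (\<forall>e\<in>B. \<forall>b\<in>B. e \<bullet> b = (if e = b then 1 else 0))
           \<and> (\<forall>e\<in>B. m e > 0 \<and> P *v e = m e *\<^sub>R e)"
proof -
  obtain B where spanB: "span B = UNIV" and orthB: "pairwise orthogonal B"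
      and eig: "\<forall>e\<in>B. norm e = 1 \<and> P *v e = (e \<bullet> (P *v e)) *\<^sub>R e"
    using symmetric_orthonormal_eigenbasis[OF PSym_symmetric[OF P], of UNIV] by auto
  have "e \<bullet> (P *v e) > 0" if "e \<in> B" for e
    using eig that PSym_positive[OF P, of e] by (metis norm_zero zero_neq_one)
  moreover have "independent B" using orthB eig by (intro pairwise_orthogonal_independent) auto
  hence "finite B" using independent_bound by blast
  moreover have "e \<bullet> b = (if e = b then 1 else 0)" if "e \<in> B" "b \<in> B" for e b
    using that orthB eig by (auto simp: pairwise_def orthogonal_def dot_square_norm)
  ultimately show ?thesis using spanB eig by (intro exI[of _ B] exI[of _ "\<lambda>e. e \<bullet> (P *v e)"]) auto
qed

text \<open>Positive definite square root: keep the eigenbasis of P and take the square roots of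
  the eigenvalues.\<close>
lemma PSym_sqrt_exists:
  assumes P: "P \<in> PSym"
  shows "\<exists>U\<in>PSym. U ** U = P"
proof -
  obtain B m where finB: "finite B" and spanB: "span B = UNIV"
      and orthonormal: "\<And>e b. e \<in> B \<Longrightarrow> b \<in> B \<Longrightarrow> e \<bullet> b = (if e = b then 1 else 0)"
      and m_pos: "\<And>e. e \<in> B \<Longrightarrow> m e > 0" and eig: "\<And>e. e \<in> B \<Longrightarrow> P *v e = m e *\<^sub>R e"
    using PSym_eigenbasis[OF P] by metis
  define U where "U = (\<chi> i j. \<Sum>e\<in>B. sqrt (m e) * e$i * e$j)"
  have U_apply: "U *v x = (\<Sum>e\<in>B. (sqrt (m e) * (e \<bullet> x)) *\<^sub>R e)" for x
    unfolding U_def matrix_vector_mult_def inner_vec_def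
    apply (simp add: vec_eq_iff sum_distrib_left sum_distrib_right mult.assoc)
    apply (subst sum.swap)
    apply (simp add: mult_ac)
    done
  have U_eig: "U *v b = sqrt (m b) *\<^sub>R b" if "b \<in> B" for b
  proof -
    have "U *v b = (\<Sum>e\<in>B. if e = b then sqrt (m e) *\<^sub>R e else 0)"
      unfolding U_apply using that by (intro sum.cong) (auto simp: orthonormal)
    thus ?thesis using that finB by simp
  qed
  have "(U ** U) *v b = P *v b" if "b \<in> B" for b
    using that U_eig eig m_pos[OF that]
    by (simp add: matrix_vector_mul_assoc[symmetric] matrix_vector_mult_scaleR)
  hence "(U ** U) *v x = P *v x" for x
    using linear_eq_on_span[OF matrix_vector_mul_linear matrix_vector_mul_linear, of B] spanB
    by blast
  hence UU: "U ** U = P" by (simp add: matrix_eq)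
  have "transpose U = U" by (simp add: U_def transpose_def vec_eq_iff mult_ac)
  moreover have "x \<bullet> (U *v x) > 0" if x: "x \<noteq> 0" for x
  proof -
    have "\<exists>e\<in>B. e \<bullet> x \<noteq> 0"
    proof (rule ccontr)
      assume "\<not> ?thesis"
      hence "orthogonal x x" using spanB by (metis UNIV_I orthogonal_def inner_commute orthogonal_to_span)
      thus False using x by (simp add: orthogonal_def)
    qed
    moreover have "x \<bullet> (U *v x) = (\<Sum>e\<in>B. sqrt (m e) * (e \<bullet> x)\<^sup>2)"
      by (simp add: U_apply inner_sum_right power2_eq_square inner_commute mult_ac)
    moreover have "sqrt (m e) * (e \<bullet> x)\<^sup>2 \<ge> 0" if "e \<in> B" for e
      using m_pos[OF that] by simp
    ultimately show ?thesis using finB m_pos by (auto intro!: sum_pos2)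
  qed
  ultimately show ?thesis using UU by (auto simp: PSym_def)
qed

text \<open>Uniqueness: if U^2 = V^2 with U, V positive definite, then D = U - V satisfies
  UD + DV = 0, hence tr(D^T U D) + tr(D^T V D) = 0, and both traces are nonnegative.\<close>
lemma PSym_sqrt_unique:
  assumes U: "U \<in> PSym" and V: "V \<in> PSym" and eq: "U ** U = V ** V"
  shows "U = V"
proof -
  define D where "D = U - V"
  have D_sym: "transpose D = D"
    using U V by (simp add: D_def transpose_diff PSym_symmetric)
  have "U ** D + D ** V = U ** U - V ** V"
    by (simp add: D_def matrix_mult_diff_left matrix_mult_diff_right)
  hence UD_DV: "U ** D + D ** V = 0" using eq by simp
  have "trace (D ** U ** D) + trace (D ** V ** D) = trace (D ** (U ** D + D ** V))"
    by (metis matrix_add_ldistrib matrix_mul_assoc trace_add trace_mul_sym)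
  hence "trace (transpose D ** U ** D) + trace (transpose D ** V ** D) = 0"
    using UD_DV D_sym by (simp add: trace_def)
  hence "trace (transpose D ** U ** D) = 0"
    using PSym_trace_congruence_nonneg(1)[OF U, of D] PSym_trace_congruence_nonneg(1)[OF V, of D]
    by linarith
  hence "D = 0" by (rule PSym_trace_congruence_nonneg(2)[OF U])
  thus ?thesis by (simp add: D_def)
qed

lemma msqrt: "P \<in> PSym \<Longrightarrow> msqrt P \<in> PSym \<and> msqrt P ** msqrt P = P"
  unfolding msqrt_def
  by (rule theI') (metis PSym_sqrt_exists PSym_sqrt_unique)

text \<open>det P = (det sqrt P)^2 with sqrt P invertible.\<close>
lemma PSym_det_pos: "P \<in> PSym \<Longrightarrow> det P > 0"
  by (metis PSym_invertible PSym_sqrt_exists det_mul invertible_det_nz not_real_square_gt_zero)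

lemma Cof_mult_transpose: "Cof X ** transpose X = det X *\<^sub>R mat 1"
  unfolding vec_eq_iff
  by (auto simp: forall_3 matrix_matrix_mult_def sum_3 Cof_def det_3 transpose_def mat_def
      algebra_simps)

lemma Cof_Cayley_Hamilton:
  "transpose (Cof X) = X ** X - trace X *\<^sub>R X + trace (Cof X) *\<^sub>R mat 1"
  unfolding vec_eq_iff
  by (auto simp: forall_3 matrix_matrix_mult_def sum_3 Cof_def det_3 transpose_def mat_def
      trace_def algebra_simps)

lemma Cof_invertible:
  assumes "invertible X" shows "Cof X = det X *\<^sub>R transpose (matrix_inv X)"
proof -
  have "Cof X = Cof X ** (transpose X ** transpose (matrix_inv X))"
    using matrix_inv_left[OF assms] by (metis matrix_mul_rid matrix_transpose_mul transpose_mat)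
  also have "\<dots> = det X *\<^sub>R transpose (matrix_inv X)"
    by (simp add: matrix_mul_assoc Cof_mult_transpose matrix_mult_scaleR_left)
  finally show ?thesis .
qed

text \<open>The inverse as a polynomial in the entries divided by det; it shows that the inverse
  is differentiable wherever det does not vanish.\<close>
lemma matrix_inv_adjugate:
  assumes "invertible X"
  shows "matrix_inv X = inverse (det X) *\<^sub>R (X ** X - trace X *\<^sub>R X + trace (Cof X) *\<^sub>R mat 1)"
proof -
  have "transpose (Cof X) = det X *\<^sub>R matrix_inv X"
    using Cof_invertible[OF assms] by (simp add: transpose_scalar)
  thus ?thesis using assms by (simp add: Cof_Cayley_Hamilton[symmetric] invertible_det_nz)
qed

lemma matrix_entry_has_derivative [derivative_intros]:
  "((\<lambda>A::real^'n^'m. A$i$j) has_derivative (\<lambda>H. H$i$j)) F"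
  by (intro bounded_linear_imp_has_derivative
      bounded_linear_compose[OF bounded_linear_vec_nth bounded_linear_vec_nth])

lemma det_has_derivative: "(det has_derivative (\<lambda>H. Cof X \<bullet> H)) (at (X::mat3))"
proof -
  have expand: "det = (\<lambda>A::mat3. A$1$1 * A$2$2 * A$3$3 + A$1$2 * A$2$3 * A$3$1 + A$1$3 * A$2$1 * A$3$2
      - A$1$1 * A$2$3 * A$3$2 - A$1$2 * A$2$1 * A$3$3 - A$1$3 * A$2$2 * A$3$1)"
    by (rule ext) (rule det_3)
  show ?thesis unfolding expand
    by ((rule derivative_eq_intros refl)+, rule ext) (simp add: inner_vec_def sum_3 Cof_def det_3 algebra_simps)
qed

lemma trace_has_derivative: "(trace has_derivative (\<lambda>H. mat 1 \<bullet> H)) (at (X::mat3))"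
proof -
  have expand: "trace = (\<lambda>A::mat3. A$1$1 + A$2$2 + A$3$3)" by (rule ext) (simp add: trace_def sum_3)
  show ?thesis unfolding expand
    by ((rule derivative_eq_intros refl)+, rule ext) (simp add: inner_vec_def sum_3 mat_def)
qed

lemma trace_Cof_has_derivative:
  "((\<lambda>X. trace (Cof X)) has_derivative (\<lambda>H. (trace X *\<^sub>R mat 1 - transpose X) \<bullet> H)) (at (X::mat3))"
proof -
  have expand: "(\<lambda>X. trace (Cof X)) = (\<lambda>A::mat3. A$1$1 * A$2$2 - A$1$2 * A$2$1 + A$1$1 * A$3$3
      - A$1$3 * A$3$1 + A$2$2 * A$3$3 - A$2$3 * A$3$2)"
    by (rule ext) (simp add: trace_def sum_3 Cof_def det_3 algebra_simps)
  show ?thesis unfolding expand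
    by ((rule derivative_eq_intros refl)+, rule ext)
      (simp add: inner_vec_def sum_3 mat_def trace_def transpose_def algebra_simps)
qed

lemma gradient_chain_curve:
  fixes f :: "'a::real_inner \<Rightarrow> real"
  assumes f: "(f has_derivative (\<lambda>H. G \<bullet> H)) (at (c t))"
    and c: "(c has_vector_derivative c') (at t within T)"
  shows "((\<lambda>s. f (c s)) has_real_derivative (G \<bullet> c')) (at t within T)"
proof -
  have "((f \<circ> c) has_derivative ((\<lambda>H. G \<bullet> H) \<circ> (\<lambda>u. u *\<^sub>R c'))) (at t within T)"
    using c has_derivative_at_withinI[OF f] unfolding has_vector_derivative_def
    by (rule diff_chain_within)
  moreover have "(\<lambda>H. G \<bullet> H) \<circ> (\<lambda>u. u *\<^sub>R c') = (\<lambda>u. (G \<bullet> c') * u)"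
    by (rule ext) (simp add: mult.commute)
  ultimately show ?thesis by (simp add: has_field_derivative_def o_def)
qed

lemma matrix_mult_has_vector_derivative:
  fixes f g :: "real \<Rightarrow> real^'n^'n"
  assumes "(f has_vector_derivative f') (at x within s)" and "(g has_vector_derivative g') (at x within s)"
  shows "((\<lambda>x. f x ** g x) has_vector_derivative (f x ** g' + f' ** g x)) (at x within s)"
  using bounded_bilinear.has_vector_derivative[OF bounded_bilinear_matrix_mult assms] by simp

text \<open>A curve of invertible matrices has a differentiable inverse: by the adjugate formula
  the inverse is built from products, det, tr and tr Cof of the curve.\<close>
lemma matrix_inv_curve_differentiable:
  fixes c :: "real \<Rightarrow> mat3"
  assumes inv: "\<forall>s\<in>T. invertible (c s)" and t: "t \<in> T"
    and c: "(c has_vector_derivative c') (at t within T)"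
  shows "\<exists>D. ((\<lambda>s. matrix_inv (c s)) has_vector_derivative D) (at t within T)"
proof -
  let ?adj = "\<lambda>s. c s ** c s - trace (c s) *\<^sub>R c s + trace (Cof (c s)) *\<^sub>R mat 1"
  have det_nz: "det (c t) \<noteq> 0" using inv t by (simp add: invertible_det_nz)
  note det' = gradient_chain_curve[OF det_has_derivative c]
    and trace' = gradient_chain_curve[OF trace_has_derivative c]
    and trace_Cof' = gradient_chain_curve[OF trace_Cof_has_derivative c]
  obtain D where D: "((\<lambda>s. inverse (det (c s)) *\<^sub>R ?adj s) has_vector_derivative D) (at t within T)"
    using has_vector_derivative_scaleR[OF DERIV_inverse_fun[OF det' det_nz]
        has_vector_derivative_add[OF has_vector_derivative_diff[OF
          matrix_mult_has_vector_derivative[OF c c] has_vector_derivative_scaleR[OF trace' c]]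
          has_vector_derivative_scaleR[OF trace_Cof' has_vector_derivative_const]]] by blast
  have "((\<lambda>s. matrix_inv (c s)) has_vector_derivative D) (at t within T)"
    by (rule has_vector_derivative_transform[OF t _ D]) (use inv matrix_inv_adjugate in auto)
  thus ?thesis ..
qed

text \<open>Derivative of the inverse along a curve of invertible matrices, (C^-1)' = - C^-1 C' C^-1,
  read off from the identity C(s)^-1 - C(t)^-1 = - C(s)^-1 (C(s) - C(t)) C(t)^-1.\<close>
lemma matrix_inv_has_vector_derivative:
  fixes c :: "real \<Rightarrow> mat3"
  assumes inv: "\<forall>s\<in>T. invertible (c s)" and t: "t \<in> T"
    and c: "(c has_vector_derivative c') (at t within T)"
  shows "((\<lambda>s. matrix_inv (c s)) has_vector_derivative
      - (matrix_inv (c t) ** c' ** matrix_inv (c t))) (at t within T)"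
proof -
  let ?f = "\<lambda>s. matrix_inv (c s)"
  obtain D where fD: "(?f has_vector_derivative D) (at t within T)"
    using matrix_inv_curve_differentiable[OF inv t c] by blast
  let ?g = "\<lambda>s. - (?f s ** ((c s - c t) ** ?f t))"
  have "((\<lambda>s. (c s - c t) ** ?f t) has_vector_derivative (c' ** ?f t)) (at t within T)"
    using matrix_mult_has_vector_derivative[OF has_vector_derivative_diff[OF c
          has_vector_derivative_const] has_vector_derivative_const] by simp
  from has_vector_derivative_minus[OF matrix_mult_has_vector_derivative[OF fD this]]
  have gD: "(?g has_vector_derivative - (?f t ** (c' ** ?f t))) (at t within T)" by simp
  have "?f s - ?f t = ?g s" if "s \<in> T" for s
  proof -
    have "?f s ** ((c s - c t) ** ?f t) = ?f s ** c s ** ?f t - ?f s ** (c t ** ?f t)"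
      by (simp add: matrix_mult_diff_left matrix_mult_diff_right matrix_mul_assoc)
    also have "\<dots> = ?f t - ?f s"
      using matrix_inv_left[of "c s"] matrix_inv_right[of "c t"] inv that t by simp
    finally show ?thesis by simp
  qed
  hence "((\<lambda>s. ?f s - ?f t) has_vector_derivative - (?f t ** (c' ** ?f t))) (at t within T)"
    by (intro has_vector_derivative_transform[OF t _ gD]) auto
  from has_vector_derivative_add[OF this has_vector_derivative_const[of "?f t"]]
  show ?thesis by (simp add: matrix_mul_assoc)
qed

definition invariants :: "mat3 \<Rightarrow> real^3" where
  "invariants X = vector [trace X, trace (Cof X), det X]"

definition Wt_grad :: "(real^3 \<Rightarrow> real^3) \<Rightarrow> mat3 \<Rightarrow> mat3" where
  "Wt_grad d\<Psi> X = d\<Psi> (invariants X) $ 1 *\<^sub>R mat 1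
     + d\<Psi> (invariants X) $ 2 *\<^sub>R (trace X *\<^sub>R mat 1 - transpose X)
     + d\<Psi> (invariants X) $ 3 *\<^sub>R Cof X"

lemma invariants_has_derivative:
  "(invariants has_derivative (\<lambda>H. (mat 1 \<bullet> H) *\<^sub>R axis 1 1
      + ((trace X *\<^sub>R mat 1 - transpose X) \<bullet> H) *\<^sub>R axis 2 1 + (Cof X \<bullet> H) *\<^sub>R axis 3 1)) (at X)"
proof -
  have expand: "invariants = (\<lambda>X. trace X *\<^sub>R axis 1 1 + trace (Cof X) *\<^sub>R axis 2 1 + det X *\<^sub>R axis 3 1)"
    by (rule ext) (simp add: invariants_def vec_eq_iff forall_3 axis_def)
  show ?thesis unfolding expand
    by (rule derivative_eq_intros trace_has_derivative trace_Cof_has_derivative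
        det_has_derivative refl)+
qed

lemma Wt_has_derivative:
  assumes psi: "\<forall>x. (\<forall>i. x $ i > 0) \<longrightarrow> (\<Psi> has_derivative (\<lambda>h. d\<Psi> x \<bullet> h)) (at x)"
    and pos: "trace X > 0" "trace (Cof X) > 0" "det X > 0"
  shows "(Wt \<Psi> has_derivative (\<lambda>H. Wt_grad d\<Psi> X \<bullet> H)) (at X)"
proof -
  have "\<forall>i. invariants X $ i > 0" using pos by (simp add: invariants_def forall_3)
  hence "(\<Psi> has_derivative (\<lambda>h. d\<Psi> (invariants X) \<bullet> h)) (at (invariants X))" using psi by blast
  from diff_chain_at[OF invariants_has_derivative this]
  have "((\<Psi> \<circ> invariants) has_derivative (\<lambda>H. Wt_grad d\<Psi> X \<bullet> H)) (at X)"
    by (simp add: o_def Wt_grad_def inner_add_left inner_add_right inner_axis algebra_simps)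
  moreover have "Wt \<Psi> = \<Psi> \<circ> invariants" by (rule ext) (simp add: Wt_def invariants_def)
  ultimately show ?thesis by simp
qed

lemma Dgrad_eq:
  assumes "(f has_derivative (\<lambda>H. G \<bullet> H)) (at (X::mat3))"
  shows "Dgrad f X = G"
  unfolding Dgrad_def
proof (rule the_equality)
  fix G' assume "(f has_derivative (\<lambda>H. G' \<bullet> H)) (at X)"
  hence "(\<lambda>H. G' \<bullet> H) = (\<lambda>H. G \<bullet> H)" using has_derivative_unique assms by blast
  hence "(G' - G) \<bullet> (G' - G) = 0" by (metis inner_diff_left right_minus_eq)
  thus "G' = G" by simp
qed (rule assms)

lemma invariants_pos:
  assumes F: "det F > 0" and P: "P \<in> PSym"
  defines "X \<equiv> transpose F ** F ** matrix_inv P"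
  shows "trace X > 0" and "trace (Cof X) > 0" and "det X > 0"
proof -
  have iF: "invertible F" and iFt: "invertible (transpose F)"
    using F by (simp_all add: invertible_det_nz)
  have iP: "invertible P" and Pi: "matrix_inv P \<in> PSym"
    using PSym_invertible[OF P] PSym_matrix_inv[OF P] .
  have "trace X = trace (transpose (transpose F) ** matrix_inv P ** transpose F)"
    unfolding X_def by (metis matrix_mul_assoc trace_mul_sym transpose_transpose)
  thus "trace X > 0" using PSym_trace_congruence_pos[OF Pi iFt] by simp
  have "det X = det F * det F / det P"
    by (simp add: X_def det_mul det_matrix_inv[OF iP] det_transpose)
  thus dX: "det X > 0" using F PSym_det_pos[OF P] by simp
  define Fi where "Fi = matrix_inv F"
  have "Cof X = det X *\<^sub>R transpose (matrix_inv X)"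
    using Cof_invertible dX invertible_det_nz by force
  also have "matrix_inv X = P ** Fi ** transpose Fi"
    using iF iFt iP Pi PSym_invertible
    by (simp add: X_def Fi_def matrix_inv_mult invertible_mult matrix_inv_inv matrix_inv_transpose
        matrix_mul_assoc)
  finally have "trace (Cof X) = det X * trace (transpose Fi ** P ** Fi)"
    by (metis matrix_mul_assoc trace_mul_sym trace_scaleR trace_transpose)
  thus "trace (Cof X) > 0"
    using dX PSym_trace_congruence_pos[OF P invertible_matrix_inv[OF iF]] by (simp add: Fi_def)
qed

text \<open>Isotropy makes the stress coaxial: C times the gradient of Wt at C P^-1 is symmetric,
  since each of its three terms C, tr(X) C - C P^-1 C and det(X) P is.\<close>
lemma Wt_grad_coaxial:
  assumes Csym: "transpose C = C" and iC: "invertible C"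
    and Psym: "transpose P = P" and iP: "invertible P"
  defines "X \<equiv> C ** matrix_inv P"
  shows "transpose (C ** Wt_grad d X) = C ** Wt_grad d X"
proof -
  define Pi where "Pi = matrix_inv P"
  have Pisym: "transpose Pi = Pi" using matrix_inv_transpose[OF iP] Psym by (simp add: Pi_def)
  have iX: "invertible X" unfolding X_def by (rule invertible_mult[OF iC invertible_matrix_inv[OF iP]])
  have "C ** Cof X = det X *\<^sub>R (C ** transpose (P ** matrix_inv C))"
    using Cof_invertible[OF iX] iC iP
    by (simp add: X_def Pi_def matrix_inv_mult invertible_matrix_inv matrix_inv_inv
        matrix_mult_scaleR_right)
  also have "C ** transpose (P ** matrix_inv C) = P"
    using matrix_inv_transpose[OF iC] Csym Psym
    by (simp add: matrix_transpose_mul matrix_mul_assoc matrix_inv_right[OF iC])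
  finally have CCof: "C ** Cof X = det X *\<^sub>R P" .
  have CXt: "C ** transpose X = C ** Pi ** C"
    by (simp add: X_def Pi_def matrix_transpose_mul Csym Pisym[unfolded Pi_def] matrix_mul_assoc)
  have "C ** Wt_grad d X = d (invariants X) $ 1 *\<^sub>R C
      + d (invariants X) $ 2 *\<^sub>R (trace X *\<^sub>R C - C ** Pi ** C) + (d (invariants X) $ 3 * det X) *\<^sub>R P"
    by (simp add: Wt_grad_def matrix_add_ldistrib matrix_mult_scaleR_right matrix_mult_diff_left
        CXt CCof)
  thus ?thesis
    by (simp add: transpose_add transpose_diff transpose_scalar Csym Psym Pisym
        matrix_transpose_mul matrix_mul_assoc)
qed

lemma trace_dev3: "trace (dev3 X) = 0"
  by (simp add: dev3_def trace_sub trace_scaleR trace_I)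

lemma dev3_similar:
  assumes "invertible (U::mat3)"
  shows "dev3 (matrix_inv U ** S ** U) = matrix_inv U ** dev3 S ** U"
proof -
  have "trace (matrix_inv U ** S ** U) = trace S"
    by (metis assms matrix_inv_right matrix_mul_assoc matrix_mul_rid trace_mul_sym)
  thus ?thesis using matrix_inv_left[OF assms]
    by (simp add: dev3_def matrix_mult_diff_left matrix_mult_diff_right matrix_mult_scaleR_left
        matrix_mult_scaleR_right)
qed

text \<open>Jacobi's formula specialised to a deviatoric flow: tr(dev Y) = 0 makes the rate of
  det P vanish along P' = dev(Y) P.\<close>
lemma Cof_inner_dev3_mult:
  assumes "invertible P"
  shows "Cof P \<bullet> (dev3 Y ** P) = 0"
proof -
  have "Cof P \<bullet> (dev3 Y ** P) = det P * trace (transpose (dev3 Y ** P ** matrix_inv P))"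
    by (simp add: Cof_invertible[OF assms] inner_matrix_trace matrix_transpose_mul
        matrix_mult_scaleR_left trace_scaleR matrix_mul_assoc)
  thus ?thesis by (simp add: mult_inverse_cancel matrix_inv_right[OF assms] trace_transpose trace_dev3)
qed

text \<open>For symmetric K and P, the deviatoric part of S = 2 K P^-1 satisfies
  dev(S) P = 2 K - (tr S / 3) P, which is symmetric.\<close>
lemma dev3_stress_mult_symmetric:
  assumes Ksym: "transpose K = K" and Psym: "transpose P = P" and iP: "invertible P"
  shows "transpose (dev3 (2 *\<^sub>R (K ** matrix_inv P)) ** P) = dev3 (2 *\<^sub>R (K ** matrix_inv P)) ** P"
proof -
  have "dev3 (2 *\<^sub>R (K ** matrix_inv P)) ** P
      = 2 *\<^sub>R K - (1/3 * trace (2 *\<^sub>R (K ** matrix_inv P))) *\<^sub>R P"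
    by (simp add: dev3_def matrix_mult_diff_right matrix_mult_scaleR_left
        mult_inverse_cancel[OF matrix_inv_left[OF iP]])
  thus ?thesis by (simp add: transpose_diff transpose_scalar Ksym Psym)
qed

lemma dissipation_identity:
  assumes Csym: "transpose C = C" and Ksym: "transpose (C ** G) = C ** G"
    and Psym: "transpose P = P" and iP: "invertible P"
  defines "S \<equiv> 2 *\<^sub>R (C ** G ** matrix_inv P)"
  shows "G \<bullet> (C ** matrix_inv P ** dev3 S) = trace (dev3 S ** dev3 S) / 2"
proof -
  define Pi where "Pi = matrix_inv P"
  define D where "D = dev3 S"
  have Pisym: "transpose Pi = Pi" using matrix_inv_transpose[OF iP] Psym by (simp add: Pi_def)
  have Ksym': "transpose G ** transpose C = C ** G" using Ksym by (simp add: matrix_transpose_mul)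
  have "G \<bullet> (C ** Pi ** D) = trace (G ** (transpose D ** Pi ** C))"
    by (simp add: inner_matrix_trace matrix_transpose_mul Csym Pisym matrix_mul_assoc)
  also have "\<dots> = trace (C ** G ** (transpose D ** Pi))"
    by (metis matrix_mul_assoc trace_mul_sym)
  also have "\<dots> = trace (Pi ** (C ** G) ** transpose D)"
    by (metis matrix_mul_assoc trace_mul_sym)
  also have "Pi ** (C ** G) = (1/2) *\<^sub>R transpose S"
    by (simp add: S_def Pi_def transpose_scalar matrix_transpose_mul Ksym' Pisym[unfolded Pi_def])
  also have "trace ((1/2) *\<^sub>R transpose S ** transpose D) = trace (D ** S) / 2"
    by (simp add: matrix_mult_scaleR_left trace_scaleR matrix_transpose_mul[symmetric]
        trace_transpose)
  also have "D ** S = D ** D + (trace S / 3) *\<^sub>R D"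
    by (simp add: D_def dev3_def matrix_mult_diff_left matrix_mult_scaleR_right algebra_simps)
  finally show ?thesis
    by (simp add: D_def Pi_def trace_add trace_scaleR trace_dev3)
qed

text \<open>The deviatoric norm is unchanged by passing to the similar symmetric tensor
  U^-1 S U, U = sqrt P.\<close>
lemma norm_dev3_conjugate_sqrt:
  assumes Ksym: "transpose K = K" and P: "P \<in> PSym"
  defines "S \<equiv> 2 *\<^sub>R (K ** matrix_inv P)"
  shows "sqrt (trace (dev3 S ** dev3 S)) = norm (dev3 (matrix_inv (msqrt P) ** S ** msqrt P))"
proof -
  define U where "U = msqrt P"
  define Ui where "Ui = matrix_inv U"
  have U: "U \<in> PSym" "U ** U = P" using msqrt[OF P] by (auto simp: U_def)
  have iU: "invertible U" using PSym_invertible[OF U(1)] .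
  have UUi: "U ** Ui = mat 1" using matrix_inv_right[OF iU] by (simp add: Ui_def)
  have Uisym: "transpose Ui = Ui"
    using matrix_inv_transpose[OF iU] PSym_symmetric[OF U(1)] by (simp add: Ui_def)
  have "matrix_inv P = Ui ** Ui" using matrix_inv_mult[OF iU iU] U(2) by (simp add: Ui_def)
  hence "Ui ** S ** U = 2 *\<^sub>R (Ui ** K ** Ui)"
    by (simp add: S_def matrix_mult_scaleR_left matrix_mult_scaleR_right matrix_mul_assoc
        mult_inverse_cancel[OF matrix_inv_left[OF iU]] Ui_def)
  hence sym: "transpose (dev3 (Ui ** S ** U)) = dev3 (Ui ** S ** U)"
    by (simp add: dev3_def transpose_diff transpose_scalar matrix_transpose_mul Uisym Ksym
        matrix_mul_assoc)
  have "dev3 (Ui ** S ** U) \<bullet> dev3 (Ui ** S ** U)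
      = trace (dev3 (Ui ** S ** U) ** dev3 (Ui ** S ** U))"
    by (simp add: inner_matrix_trace sym)
  also have "\<dots> = trace (Ui ** (dev3 S ** dev3 S ** U))"
    by (simp add: dev3_similar[OF iU, folded Ui_def] matrix_mul_assoc mult_inverse_cancel[OF UUi])
  also have "\<dots> = trace (dev3 S ** dev3 S)"
    by (metis mult_inverse_cancel[OF UUi] matrix_mul_assoc trace_mul_sym)
  finally show ?thesis by (simp add: norm_eq_sqrt_inner U_def Ui_def)
qed

lemma Wt_gradient_at_state:
  assumes psi: "\<forall>x. (\<forall>i. x $ i > 0) \<longrightarrow> (\<Psi> has_derivative (\<lambda>h. d\<Psi> x \<bullet> h)) (at x)"
    and F: "det F > 0" and P: "P \<in> PSym"
  defines "C \<equiv> transpose F ** F"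
  shows "(Wt \<Psi> has_derivative (\<lambda>H. Dgrad (Wt \<Psi>) (C ** matrix_inv P) \<bullet> H)) (at (C ** matrix_inv P))"
    and "transpose (C ** Dgrad (Wt \<Psi>) (C ** matrix_inv P)) = C ** Dgrad (Wt \<Psi>) (C ** matrix_inv P)"
proof -
  have W: "(Wt \<Psi> has_derivative (\<lambda>H. Wt_grad d\<Psi> (C ** matrix_inv P) \<bullet> H)) (at (C ** matrix_inv P))"
    using Wt_has_derivative[OF psi invariants_pos[OF F P]] by (simp add: C_def)
  thus "(Wt \<Psi> has_derivative (\<lambda>H. Dgrad (Wt \<Psi>) (C ** matrix_inv P) \<bullet> H)) (at (C ** matrix_inv P))"
    by (simp add: Dgrad_eq)
  have "invertible C" using F by (simp add: C_def invertible_det_nz det_mul det_transpose)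
  moreover have "transpose C = C" by (simp add: C_def matrix_transpose_mul)
  ultimately show "transpose (C ** Dgrad (Wt \<Psi>) (C ** matrix_inv P)) = C ** Dgrad (Wt \<Psi>) (C ** matrix_inv P)"
    using Wt_grad_coaxial PSym_symmetric[OF P] PSym_invertible[OF P] Dgrad_eq[OF W] by metis
qed

lemma flow_rule_pointwise:
  assumes Csym: "transpose C = C"
    and Ksym: "transpose (C ** Dgrad (Wt \<Psi>) (C ** matrix_inv P)) = C ** Dgrad (Wt \<Psi>) (C ** matrix_inv P)"
    and P: "P \<in> PSym" and phi_pos: "phi \<Psi> C P > 0"
    and flow: "P' = (lam / phi \<Psi> C P) *\<^sub>R (dev3 (Sigt \<Psi> C P) ** P)"
  shows "transpose P' = P'"
    and "Cof P \<bullet> P' = 0"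
    and "Dgrad (Wt \<Psi>) (C ** matrix_inv P) \<bullet> (C ** - (matrix_inv P ** P' ** matrix_inv P))
           = - lam / 2 * phi \<Psi> C P"
    and "phi \<Psi> C P = norm (dev3 (matrix_inv (msqrt P) ** Sigt \<Psi> C P ** msqrt P))"
proof -
  define G where "G = Dgrad (Wt \<Psi>) (C ** matrix_inv P)"
  define D where "D = dev3 (Sigt \<Psi> C P)"
  define \<phi> where "\<phi> = phi \<Psi> C P"
  have iP: "invertible P" and Psym: "transpose P = P"
    using PSym_invertible[OF P] PSym_symmetric[OF P] .
  have Sigt: "Sigt \<Psi> C P = 2 *\<^sub>R (C ** G ** matrix_inv P)" by (simp add: Sigt_def G_def)
  have phi: "\<phi> = sqrt (trace (D ** D))" by (simp add: \<phi>_def phi_def D_def)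
  hence trDD: "trace (D ** D) > 0" using phi_pos by (simp add: \<phi>_def)
  show "transpose P' = P'"
    using dev3_stress_mult_symmetric[OF Ksym Psym iP] flow
    by (simp add: transpose_scalar Sigt_def matrix_mul_assoc)
  show "Cof P \<bullet> P' = 0" using Cof_inner_dev3_mult[OF iP] flow by simp
  have "matrix_inv P ** P' ** matrix_inv P = (lam / \<phi>) *\<^sub>R (matrix_inv P ** D)"
    by (simp add: flow D_def \<phi>_def matrix_mult_scaleR_left matrix_mult_scaleR_right
        mult_inverse_cancel[OF matrix_inv_right[OF iP]] matrix_mul_assoc)
  hence "G \<bullet> (C ** - (matrix_inv P ** P' ** matrix_inv P))
      = - (lam / \<phi>) * (G \<bullet> (C ** matrix_inv P ** D))"
    by (simp add: matrix_mult_minus_right matrix_mult_scaleR_right matrix_mul_assoc)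
  also have "G \<bullet> (C ** matrix_inv P ** D) = \<phi>\<^sup>2 / 2"
    using dissipation_identity[OF Csym Ksym[folded G_def] Psym iP] trDD
    by (simp add: phi D_def Sigt)
  finally show "G \<bullet> (C ** - (matrix_inv P ** P' ** matrix_inv P)) = - lam / 2 * \<phi>"
    using phi_pos by (simp add: \<phi>_def power2_eq_square)
  show "phi \<Psi> C P = norm (dev3 (matrix_inv (msqrt P) ** Sigt \<Psi> C P ** msqrt P))"
    using norm_dev3_conjugate_sqrt[OF Ksym P] by (simp add: phi_def Sigt G_def matrix_mul_assoc)
qed

lemma det_constant_on_interval:
  fixes c c' :: "real \<Rightarrow> mat3"
  assumes T: "is_interval T"
    and c: "\<forall>t\<in>T. (c has_vector_derivative c' t) (at t within T)"
    and tangent: "\<forall>t\<in>T. Cof (c t) \<bullet> c' t = 0"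
    and "s \<in> T" "t \<in> T"
  shows "det (c s) = det (c t)"
proof -
  have "((\<lambda>s. det (c s)) has_derivative (\<lambda>h. 0)) (at t within T)" if "t \<in> T" for t
    using gradient_chain_curve[OF det_has_derivative, of c "c' t" t T] c tangent that
    by (simp add: has_field_derivative_def lambda_zero[symmetric])
  then obtain k where "\<forall>x\<in>T. det (c x) = k"
    using has_derivative_zero_constant[OF is_interval_convex[OF T]] by blast
  thus ?thesis using assms(4,5) by simp
qed

lemma has_derivative_along_inverse_curve:
  fixes c :: "real \<Rightarrow> mat3" and C :: mat3
  assumes f: "(f has_derivative (\<lambda>H. G \<bullet> H)) (at (C ** matrix_inv (c t)))"
    and inv: "\<forall>s\<in>T. invertible (c s)" and t: "t \<in> T"
    and c: "(c has_vector_derivative c') (at t within T)"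
  shows "((\<lambda>s. f (C ** matrix_inv (c s))) has_real_derivative
           (G \<bullet> (C ** - (matrix_inv (c t) ** c' ** matrix_inv (c t))))) (at t within T)"
proof -
  have "((\<lambda>s. C ** matrix_inv (c s)) has_vector_derivative
      C ** - (matrix_inv (c t) ** c' ** matrix_inv (c t))) (at t within T)"
    using matrix_mult_has_vector_derivative[OF has_vector_derivative_const[of C]
        matrix_inv_has_vector_derivative[OF inv t c]] by simp
  thus ?thesis using gradient_chain_curve[of f G "\<lambda>s. C ** matrix_inv (c s)"] f by simp
qed

theorem mainTheorem13:
  fixes \<Psi> :: "real^3 \<Rightarrow> real" and d\<Psi> :: "real^3 \<Rightarrow> real^3"
    and F :: mat3 and Cp Cp' :: "real \<Rightarrow> mat3" and lam :: "real \<Rightarrow> real"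
    and T :: "real set"
  assumes psi_deriv: "\<forall>x. (\<forall>i. x $ i > 0) \<longrightarrow> (\<Psi> has_derivative (\<lambda>h. d\<Psi> x \<bullet> h)) (at x)"
    and psi_C1: "continuous_on {x. \<forall>i. x $ i > 0} d\<Psi>"
    and F_GL: "det F > 0"
    and T_int: "is_interval T"
    and Cp_PSym: "\<forall>t\<in>T. Cp t \<in> PSym"
    and Cp_ode: "\<forall>t\<in>T. (Cp has_vector_derivative Cp' t) (at t within T)"
    and flow: "\<forall>t\<in>T. Cp' t = (lam t / phi \<Psi> (transpose F ** F) (Cp t))
                  *\<^sub>R (dev3 (Sigt \<Psi> (transpose F ** F) (Cp t)) ** Cp t)"
    and lam_nonneg: "\<forall>t\<in>T. lam t \<ge> 0"
    and phi_pos: "\<forall>t\<in>T. phi \<Psi> (transpose F ** F) (Cp t) > 0"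
  shows "(\<forall>t\<in>T. transpose (Cp' t) = Cp' t)
       \<and> (\<forall>s\<in>T. \<forall>t\<in>T. det (Cp s) = det (Cp t))
       \<and> (\<forall>t\<in>T.
            ((\<lambda>s. Wt \<Psi> (transpose F ** F ** matrix_inv (Cp s)))
               has_real_derivative (- lam t / 2 * phi \<Psi> (transpose F ** F) (Cp t))) (at t within T)
          \<and> - lam t / 2 * phi \<Psi> (transpose F ** F) (Cp t)
              = - lam t / 2 * norm (dev3 (matrix_inv (msqrt (Cp t))
                    ** Sigt \<Psi> (transpose F ** F) (Cp t) ** msqrt (Cp t)))
          \<and> - lam t / 2 * phi \<Psi> (transpose F ** F) (Cp t) \<le> 0)"
proof -
  let ?C = "transpose F ** F"
  have Csym: "transpose ?C = ?C" by (simp add: matrix_transpose_mul)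
  have inv: "\<forall>s\<in>T. invertible (Cp s)" using Cp_PSym PSym_invertible by blast
  have at_time: "transpose (Cp' t) = Cp' t \<and> Cof (Cp t) \<bullet> Cp' t = 0
      \<and> ((\<lambda>s. Wt \<Psi> (?C ** matrix_inv (Cp s))) has_real_derivative (- lam t / 2 * phi \<Psi> ?C (Cp t)))
           (at t within T)
      \<and> - lam t / 2 * phi \<Psi> ?C (Cp t)
          = - lam t / 2 * norm (dev3 (matrix_inv (msqrt (Cp t)) ** Sigt \<Psi> ?C (Cp t) ** msqrt (Cp t)))"
    if t: "t \<in> T" for t
  proof -
    have P: "Cp t \<in> PSym" using Cp_PSym t by blast
    note grad = Wt_gradient_at_state[OF psi_deriv F_GL P]
    have P': "Cp' t = (lam t / phi \<Psi> ?C (Cp t)) *\<^sub>R (dev3 (Sigt \<Psi> ?C (Cp t)) ** Cp t)"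
      and pos: "phi \<Psi> ?C (Cp t) > 0" using flow phi_pos t by simp_all
    note rule = flow_rule_pointwise[OF Csym grad(2) P pos P']
    have "((\<lambda>s. Wt \<Psi> (?C ** matrix_inv (Cp s))) has_real_derivative
        Dgrad (Wt \<Psi>) (?C ** matrix_inv (Cp t))
          \<bullet> (?C ** - (matrix_inv (Cp t) ** Cp' t ** matrix_inv (Cp t)))) (at t within T)"
      using has_derivative_along_inverse_curve[OF grad(1) inv t] Cp_ode t by blast
    thus ?thesis using rule by simp
  qed
  have "det (Cp s) = det (Cp t)" if "s \<in> T" "t \<in> T" for s t
    using det_constant_on_interval[OF T_int Cp_ode] at_time that by blast
  moreover have "- lam t / 2 * phi \<Psi> ?C (Cp t) \<le> 0" if "t \<in> T" for t
    using lam_nonneg phi_pos that by (simp, intro mult_nonneg_nonneg) auto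
  ultimately show ?thesis using at_time by blast
qed

end
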